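(* Let $\mathcal{B}$ be a $\sigma$-algebra on a nonempty set $E$ and let $\nu$ be a $\sigma$-principal $\sigma$-maxitive measure on $\mathcal{B}$. Then $\nu$ is autocontinuous. Moreover, if the empty set is the only $\nu$-negligible subset of $E$, then $\nu$ is completely maxitive and has a cardinal density (a map $c:E\to[0,\infty]$ with $\nu(B)=\sup_{x\in B}c(x)$ for all $B\in\mathcal{B}$).
   Context: A $\sigma$-maxitive measure on $\mathcal{B}$ is a map $\nu:\mathcal{B}\to[0,\infty]$ with $\nu(\emptyset)=0$, $\nu(B\cup B')=\max(\nu(B),\nu(B'))$, and $\nu(\bigcup_nB_n)=\lim_n\nu(B_n)$ for nondecreasing sequences in $\mathcal{B}$. It is completely maxitive if $\nu(\bigcup_{j\in J}B_j)=\sup_{j\in J}\nu(B_j)$ for every arbitrary family $(B_j)_{j\in J}$ in $\mathcal{B}$ with $\bigcup_jB_j\in\mathcal{B}$. A subset $N\subset E$ is $\nu$-negligible if $N\subset G$ for some $G\in\mathcal{B}$ with $\nu(G)=0$. A $\sigma$-ideal of $\mathcal{B}$ is a nonempty $\mathcal{I}\subset\mathcal{B}$ closed under countable unions and under taking subsets belonging to $\mathcal{B}$; $\nu$ is $\sigma$-principal if for every $\sigma$-ideal $\mathcal{I}$ there is $L\in\mathcal{I}$ with $S\setminus L$ $\nu$-negligible for all $S\in\mathcal{I}$. $\nu$ is autocontinuous if there is a $\mathcal{B}$-measurable $f:E\to[0,\infty]$ (i.e. $\{f>t\}\in\mathcal{B}$ for all $t\ge0$) with $\nu(B)=\inf\{t>0:B\cap\{f>t\}\text{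 is }\nu\text{-negligible}\}$ for all $B\in\mathcal{B}$. *)

theory Defs
  imports "HOL-Analysis.Analysis"
begin

text \<open>Maps nu : B -> [0,infinity] are modelled as functions 'a set => ennreal,
  only their values on B matter.\<close>

definition sigma_maxitive :: "'a set set \<Rightarrow> ('a set \<Rightarrow> ennreal) \<Rightarrow> bool" where
  "sigma_maxitive B \<nu> \<longleftrightarrow>
     \<nu> {} = 0 \<and>
     (\<forall>A\<in>B. \<forall>A'\<in>B. \<nu> (A \<union> A') = max (\<nu> A) (\<nu> A')) \<and>
     (\<forall>S :: nat \<Rightarrow> 'a set. range S \<subseteq> B \<longrightarrow> incseq S \<longrightarrow>
        (\<lambda>n. \<nu> (S n)) \<longlonglongrightarrow> \<nu> (\<Union>n. S n))"

definition completely_maxitive :: "'a set set \<Rightarrow> ('a set \<Rightarrow> ennreal) \<Rightarrow> bool" where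
  "completely_maxitive B \<nu> \<longleftrightarrow>
     (\<forall>F. F \<subseteq> B \<longrightarrow> \<Union>F \<in> B \<longrightarrow> \<nu> (\<Union>F) = (SUP A\<in>F. \<nu> A))"

definition negligible_set :: "'a set \<Rightarrow> 'a set set \<Rightarrow> ('a set \<Rightarrow> ennreal) \<Rightarrow> 'a set \<Rightarrow> bool" where
  "negligible_set E B \<nu> N \<longleftrightarrow> N \<subseteq> E \<and> (\<exists>G\<in>B. N \<subseteq> G \<and> \<nu> G = 0)"

definition sigma_ideal :: "'a set set \<Rightarrow> 'a set set \<Rightarrow> bool" where
  "sigma_ideal B I \<longleftrightarrow> I \<noteq> {} \<and> I \<subseteq> B \<and>
     (\<forall>S :: nat \<Rightarrow> 'a set. range S \<subseteq> I \<longrightarrow> (\<Union>n. S n) \<in> I) \<and>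
     (\<forall>A\<in>I. \<forall>C\<in>B. C \<subseteq> A \<longrightarrow> C \<in> I)"

definition sigma_principal :: "'a set \<Rightarrow> 'a set set \<Rightarrow> ('a set \<Rightarrow> ennreal) \<Rightarrow> bool" where
  "sigma_principal E B \<nu> \<longleftrightarrow>
     (\<forall>I. sigma_ideal B I \<longrightarrow> (\<exists>L\<in>I. \<forall>S\<in>I. negligible_set E B \<nu> (S - L)))"

definition autocontinuous :: "'a set \<Rightarrow> 'a set set \<Rightarrow> ('a set \<Rightarrow> ennreal) \<Rightarrow> bool" where
  "autocontinuous E B \<nu> \<longleftrightarrow>
     (\<exists>f :: 'a \<Rightarrow> ennreal. (\<forall>t. {x\<in>E. f x > t} \<in> B) \<and>
        (\<forall>A\<in>B. \<nu> A = Inf {t. t > 0 \<and> negligible_set E B \<nu> (A \<inter> {x\<in>E. f x > t})}))"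

definition has_cardinal_density :: "'a set \<Rightarrow> 'a set set \<Rightarrow> ('a set \<Rightarrow> ennreal) \<Rightarrow> bool" where
  "has_cardinal_density E B \<nu> \<longleftrightarrow>
     (\<exists>c :: 'a \<Rightarrow> ennreal. \<forall>A\<in>B. \<nu> A = (SUP x\<in>A. c x))"

end

theory Submission
  imports Defs
begin

text \<open>For every positive rational \<open>r\<close> the sets of measure at most \<open>r\<close> form a
  \<open>\<sigma>\<close>-ideal, so \<open>\<sigma>\<close>-principality yields a set \<open>L r\<close> of measure at most \<open>r\<close> containing
  every such set up to a negligible one; unions over smaller rationals make \<open>L\<close> monotone.
  The density \<open>f x = inf {r. x \<in> L r}\<close> is measurable, and \<open>{f > r}\<close> is essentially the
  complement of \<open>L r\<close>, which gives \<open>\<nu> A = inf {t > 0. A \<inter> {f > t} negligible}\<close>.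
  If only \<open>{}\<close> is negligible, this reads \<open>\<nu> A = (SUP x\<in>A. f x)\<close>, and a pointwise
  density makes \<open>\<nu>\<close> completely maxitive.\<close>

lemma sigma_maxitive_empty: "sigma_maxitive B \<nu> \<Longrightarrow> \<nu> {} = 0"
  unfolding sigma_maxitive_def by blast

lemma sigma_maxitive_Un:
  "sigma_maxitive B \<nu> \<Longrightarrow> A \<in> B \<Longrightarrow> C \<in> B \<Longrightarrow> \<nu> (A \<union> C) = max (\<nu> A) (\<nu> C)"
  unfolding sigma_maxitive_def by blast

lemma sigma_maxitive_mono:
  assumes "sigma_maxitive B \<nu>" "A \<in> B" "C \<in> B" "A \<subseteq> C"
  shows "\<nu> A \<le> \<nu> C"
  using sigma_maxitive_Un[OF assms(1-3)] \<open>A \<subseteq> C\<close> by (metis max.cobounded1 sup.absorb2)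

lemma sigma_maxitive_UN_le:
  assumes \<nu>: "sigma_maxitive B \<nu>" and "sigma_algebra E B"
    and S: "range S \<subseteq> B" and le: "\<And>n. \<nu> (S n) \<le> t"
  shows "\<nu> (\<Union>n::nat. S n) \<le> t"
proof -
  interpret sigma_algebra E B by fact
  define T where "T n = (\<Union>i\<le>n. S i)" for n
  have T_in: "T n \<in> B" for n
    unfolding T_def using S by (intro finite_UN) auto
  have T_le: "\<nu> (T n) \<le> t" for n
  proof (induction n)
    case 0
    then show ?case using le by (simp add: T_def)
  next
    case (Suc n)
    have "T (Suc n) = T n \<union> S (Suc n)"
      unfolding T_def by (simp add: atMost_Suc Un_commute)
    moreover have "S (Suc n) \<in> B"
      using S by auto
    ultimately show ?case
      using sigma_maxitive_Un[OF \<nu> T_in] Suc le by simp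
  qed
  have "incseq T"
    unfolding T_def incseq_def by (auto intro: order_trans)
  then have "(\<lambda>n. \<nu> (T n)) \<longlonglongrightarrow> \<nu> (\<Union>n. T n)"
    using \<nu> T_in unfolding sigma_maxitive_def by blast
  moreover have "(\<Union>n. T n) = (\<Union>n. S n)"
    unfolding T_def by auto
  ultimately show ?thesis
    using T_le by (metis LIMSEQ_le_const2)
qed

lemma sigma_maxitive_countable_UN_le:
  assumes \<nu>: "sigma_maxitive B \<nu>" and "sigma_algebra E B" and "countable I"
    and F: "\<And>i. i \<in> I \<Longrightarrow> F i \<in> B" and le: "\<And>i. i \<in> I \<Longrightarrow> \<nu> (F i) \<le> t"
  shows "\<nu> (\<Union>i\<in>I. F i) \<le> t"
proof (cases "I = {}")
  case True
  then show ?thesis using sigma_maxitive_empty[OF \<nu>] by simp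
next
  case False
  then have "(\<Union>i\<in>I. F i) = (\<Union>n. F (from_nat_into I n))"
    using range_from_nat_into[OF False \<open>countable I\<close>] by (metis image_image)
  also have "\<nu> \<dots> \<le> t"
    using False by (intro sigma_maxitive_UN_le[OF \<nu> \<open>sigma_algebra E B\<close>])
      (auto intro: F le from_nat_into)
  finally show ?thesis .
qed

lemma negligible_set_subset:
  "negligible_set E B \<nu> N \<Longrightarrow> M \<subseteq> N \<Longrightarrow> negligible_set E B \<nu> M"
  unfolding negligible_set_def by blast

lemma sigma_ideal_sublevel:
  assumes \<nu>: "sigma_maxitive B \<nu>" and "sigma_algebra E B"
  shows "sigma_ideal B {A\<in>B. \<nu> A \<le> t}"
  unfolding sigma_ideal_def
proof (intro conjI ballI allI impI)
  interpret sigma_algebra E B by fact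
  show "{A\<in>B. \<nu> A \<le> t} \<noteq> {}"
    using sigma_maxitive_empty[OF \<nu>] by auto
  show "(\<Union>n. S n) \<in> {A\<in>B. \<nu> A \<le> t}" if "range S \<subseteq> {A\<in>B. \<nu> A \<le> t}" for S :: "nat \<Rightarrow> 'a set"
    using that sigma_maxitive_UN_le[OF \<nu> \<open>sigma_algebra E B\<close>, of S t] by auto
  show "C \<in> {A\<in>B. \<nu> A \<le> t}" if "A \<in> {A\<in>B. \<nu> A \<le> t}" "C \<in> B" "C \<subseteq> A" for A C
    using that sigma_maxitive_mono[OF \<nu>, of C A] by auto
qed auto

lemma ennreal_Rats_dense:
  fixes a b :: ennreal
  assumes "a < b"
  obtains r where "r \<in> \<rat>" "0 < r" "a < ennreal r" "ennreal r < b"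
proof -
  obtain y where y: "a < y" "y < b"
    using dense[OF assms] by blast
  obtain a' y' where "a = ennreal a'" "0 \<le> a'" "y = ennreal y'"
    using y by (metis ennreal_cases top.not_eq_extremum order.strict_trans less_le_not_le top_greatest)
  with y obtain r where "r \<in> \<rat>" "a' < r" "r < y'"
    using Rats_dense_in_real by (metis ennreal_less_iff)
  then show ?thesis
    using that y \<open>a = ennreal a'\<close> \<open>0 \<le> a'\<close> \<open>y = ennreal y'\<close>
    by (metis ennreal_less_iff le_less_trans less_imp_le order.strict_trans)
qed

lemma ennreal_le_if_Rats_bound:
  fixes a b :: ennreal
  assumes "\<And>r. r \<in> \<rat> \<Longrightarrow> 0 < r \<Longrightarrow> a < ennreal r \<Longrightarrow> b \<le> ennreal r"
  shows "b \<le> a"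
proof (rule ccontr)
  assume "\<not> b \<le> a"
  then obtain r where "r \<in> \<rat>" "0 < r" "a < ennreal r" "ennreal r < b"
    using ennreal_Rats_dense by (metis not_le)
  then show False using assms by (meson not_le)
qed

definition sublevel_exhaustion ::
    "'a set \<Rightarrow> 'a set set \<Rightarrow> ('a set \<Rightarrow> ennreal) \<Rightarrow> (real \<Rightarrow> 'a set) \<Rightarrow> bool" where
  "sublevel_exhaustion E B \<nu> L \<longleftrightarrow>
     mono L \<and> (\<forall>r. L r \<in> B \<and> \<nu> (L r) \<le> ennreal r) \<and>
     (\<forall>r\<in>\<rat>. 0 < r \<longrightarrow> (\<forall>S\<in>B. \<nu> S \<le> ennreal r \<longrightarrow> negligible_set E B \<nu> (S - L r)))"

lemma sigma_principal_imp_sublevel_exhaustion: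
  assumes \<nu>: "sigma_maxitive B \<nu>" and "sigma_algebra E B" and "sigma_principal E B \<nu>"
  obtains L where "sublevel_exhaustion E B \<nu> L"
proof -
  interpret sigma_algebra E B by fact
  have "\<forall>r. \<exists>L\<in>{A\<in>B. \<nu> A \<le> ennreal r}. \<forall>S\<in>{A\<in>B. \<nu> A \<le> ennreal r}. negligible_set E B \<nu> (S - L)"
    using \<open>sigma_principal E B \<nu>\<close> sigma_ideal_sublevel[OF \<nu> \<open>sigma_algebra E B\<close>]
    unfolding sigma_principal_def by blast
  then obtain L0 where "\<forall>r. L0 r \<in> {A\<in>B. \<nu> A \<le> ennreal r} \<and>
      (\<forall>S\<in>{A\<in>B. \<nu> A \<le> ennreal r}. negligible_set E B \<nu> (S - L0 r))"
    by (metis (no_types) bchoice[of UNIV] UNIV_I)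
  then have L0: "\<And>r. L0 r \<in> B" "\<And>r. \<nu> (L0 r) \<le> ennreal r"
    and negl: "\<And>r S. S \<in> B \<Longrightarrow> \<nu> S \<le> ennreal r \<Longrightarrow> negligible_set E B \<nu> (S - L0 r)"
    by auto
  define Q :: "real \<Rightarrow> real set" where "Q r = {s\<in>\<rat>. 0 < s \<and> s \<le> r}" for r
  have "countable (Q r)" for r
    unfolding Q_def by (rule countable_subset[OF _ countable_rat]) blast
  define L where "L r = (\<Union>s\<in>Q r. L0 s)" for r
  have "mono L"
    unfolding L_def Q_def mono_def by (auto intro: order_trans)
  moreover have "L r \<in> B" for r
    unfolding L_def using \<open>countable (Q r)\<close> L0 by (intro countable_UN') auto
  moreover have "\<nu> (L r) \<le> ennreal r" for r
    unfolding L_def using \<open>countable (Q r)\<close> L0(1)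
  proof (intro sigma_maxitive_countable_UN_le[OF \<nu> \<open>sigma_algebra E B\<close>])
    fix s assume "s \<in> Q r"
    then have "ennreal s \<le> ennreal r"
      unfolding Q_def by (simp add: ennreal_leI)
    then show "\<nu> (L0 s) \<le> ennreal r"
      using L0(2)[of s] by (rule order_trans[rotated])
  qed auto
  moreover have "negligible_set E B \<nu> (S - L r)"
    if "r \<in> \<rat>" "0 < r" "S \<in> B" "\<nu> S \<le> ennreal r" for r S
    using negl[OF \<open>S \<in> B\<close> \<open>\<nu> S \<le> ennreal r\<close>]
    by (rule negligible_set_subset) (use that in \<open>auto simp: L_def Q_def\<close>)
  ultimately show ?thesis
    using that unfolding sublevel_exhaustion_def by blast
qed

definition level_density :: "(real \<Rightarrow> 'a set) \<Rightarrow> 'a \<Rightarrow> ennreal" where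
  "level_density L x = (INF r\<in>{r\<in>\<rat>. 0 < r \<and> x \<in> L r}. ennreal r)"

lemma level_density_le: "r \<in> \<rat> \<Longrightarrow> 0 < r \<Longrightarrow> x \<in> L r \<Longrightarrow> level_density L x \<le> ennreal r"
  unfolding level_density_def by (auto intro: INF_lower)

lemma level_density_less_imp_mem:
  assumes "mono L" and "level_density L x < ennreal r"
  shows "x \<in> L r"
proof -
  obtain s where "x \<in> L s" "0 < s" "ennreal s < ennreal r"
    using assms(2) unfolding level_density_def INF_less_iff by blast
  then have "s \<le> r"
    by (simp add: ennreal_less_iff)
  then show ?thesis
    using \<open>mono L\<close> \<open>x \<in> L s\<close> by (auto dest: monoD)
qed

lemma level_density_superlevel_in_sets:
  assumes "sigma_algebra E B" and "mono L" and L: "\<And>r. L r \<in> B"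
  shows "{x\<in>E. t < level_density L x} \<in> B"
proof -
  interpret sigma_algebra E B by fact
  have "{x\<in>E. t < level_density L x} = {x\<in>E. \<exists>r\<in>\<rat>. t < ennreal r \<and> x \<notin> L r}"
  proof (intro set_eqI iffI)
    fix x assume "x \<in> {x\<in>E. t < level_density L x}"
    then obtain r where "x \<in> E" "r \<in> \<rat>" "0 < r" "t < ennreal r" "ennreal r < level_density L x"
      using ennreal_Rats_dense by blast
    then show "x \<in> {x\<in>E. \<exists>r\<in>\<rat>. t < ennreal r \<and> x \<notin> L r}"
      using level_density_le[of r x L] by auto
  next
    fix x assume "x \<in> {x\<in>E. \<exists>r\<in>\<rat>. t < ennreal r \<and> x \<notin> L r}"
    then show "x \<in> {x\<in>E. t < level_density L x}"
      using level_density_less_imp_mem[OF \<open>mono L\<close>] by (force simp: not_less intro: less_le_trans)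
  qed
  also have "\<dots> \<in> B"
  proof -
    have "{x\<in>E. t < ennreal r \<and> x \<notin> L r} \<in> B" for r
      using L[of r] compl_sets by (cases "t < ennreal r") (auto simp: set_diff_eq)
    then show ?thesis
      using countable_rat by (auto intro!: sets_Collect_countable_Ex')
  qed
  finally show ?thesis .
qed

lemma sublevel_exhaustion_Inf_negligible_superlevel:
  assumes \<nu>: "sigma_maxitive B \<nu>" and "sigma_algebra E B"
    and L: "sublevel_exhaustion E B \<nu> L" and "A \<in> B"
  shows "\<nu> A = Inf {t. 0 < t \<and> negligible_set E B \<nu> (A \<inter> {x\<in>E. t < level_density L x})}"
    (is "_ = Inf ?T")
proof (rule antisym)
  interpret sigma_algebra E B by fact
  have "mono L" and L_in: "\<And>r. L r \<in> B" and L_le: "\<And>r. \<nu> (L r) \<le> ennreal r"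
    using L unfolding sublevel_exhaustion_def by auto
  show "\<nu> A \<le> Inf ?T"
  proof (rule Inf_greatest, rule ccontr)
    fix t assume "t \<in> ?T" "\<not> \<nu> A \<le> t"
    then obtain G where G: "G \<in> B" "\<nu> G = 0" "A \<inter> {x\<in>E. t < level_density L x} \<subseteq> G"
      unfolding negligible_set_def by blast
    obtain r where "t < ennreal r" "ennreal r < \<nu> A"
      using ennreal_Rats_dense \<open>\<not> \<nu> A \<le> t\<close> by (metis not_le)
    have "A \<subseteq> G \<union> L r"
    proof
      fix x assume "x \<in> A"
      show "x \<in> G \<union> L r"
      proof (cases "t < level_density L x")
        case True
        then show ?thesis using G(3) \<open>x \<in> A\<close> sets_into_space[OF \<open>A \<in> B\<close>] by blast
      next
        case False
        then have "level_density L x < ennreal r"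
          using \<open>t < ennreal r\<close> by (simp add: not_less le_less_trans)
        then show ?thesis
          using level_density_less_imp_mem[OF \<open>mono L\<close>] by blast
      qed
    qed
    then have "\<nu> A \<le> \<nu> (G \<union> L r)"
      using sigma_maxitive_mono[OF \<nu> \<open>A \<in> B\<close>] G(1) L_in by blast
    also have "\<dots> = max (\<nu> G) (\<nu> (L r))"
      using sigma_maxitive_Un[OF \<nu> G(1) L_in] .
    also have "\<dots> \<le> ennreal r"
      using G(2) L_le by simp
    finally show False
      using \<open>ennreal r < \<nu> A\<close> by simp
  qed
  show "Inf ?T \<le> \<nu> A"
  proof (rule ennreal_le_if_Rats_bound)
    fix r assume "r \<in> \<rat>" "0 < r" "\<nu> A < ennreal r"
    then have "negligible_set E B \<nu> (A - L r)"
      using L \<open>A \<in> B\<close> unfolding sublevel_exhaustion_def by auto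
    moreover have "A \<inter> {x\<in>E. ennreal r < level_density L x} \<subseteq> A - L r"
      using level_density_le[OF \<open>r \<in> \<rat>\<close> \<open>0 < r\<close>, of _ L] leD by blast
    ultimately have "ennreal r \<in> ?T"
      using \<open>0 < r\<close> by (auto intro: negligible_set_subset)
    then show "Inf ?T \<le> ennreal r"
      by (rule Inf_lower)
  qed
qed

lemma sublevel_exhaustion_imp_autocontinuous:
  assumes "sigma_maxitive B \<nu>" and "sigma_algebra E B" and L: "sublevel_exhaustion E B \<nu> L"
  shows "autocontinuous E B \<nu>"
  unfolding autocontinuous_def
proof (intro exI conjI allI ballI)
  show "{x\<in>E. t < level_density L x} \<in> B" for t
    using L by (intro level_density_superlevel_in_sets[OF \<open>sigma_algebra E B\<close>])
      (auto simp: sublevel_exhaustion_def)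
  show "\<nu> A = Inf {t. 0 < t \<and> negligible_set E B \<nu> (A \<inter> {x\<in>E. t < level_density L x})}"
    if "A \<in> B" for A
    by (rule sublevel_exhaustion_Inf_negligible_superlevel[OF assms that])
qed

lemma Inf_positive_upper_bounds_ennreal: "Inf {t. 0 < t \<and> s \<le> t} = (s :: ennreal)"
proof (rule antisym)
  show "Inf {t. 0 < t \<and> s \<le> t} \<le> s"
    by (rule ennreal_le_if_Rats_bound) (auto intro: Inf_lower)
qed (rule Inf_greatest, blast)

lemma autocontinuous_imp_cardinal_density:
  assumes "sigma_algebra E B" and "sigma_maxitive B \<nu>" and "autocontinuous E B \<nu>"
    and no_null: "\<forall>N. negligible_set E B \<nu> N \<longrightarrow> N = {}"
  shows "has_cardinal_density E B \<nu>"
proof -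
  interpret sigma_algebra E B by fact
  obtain f where f: "\<And>A. A \<in> B \<Longrightarrow>
      \<nu> A = Inf {t. 0 < t \<and> negligible_set E B \<nu> (A \<inter> {x\<in>E. t < f x})}"
    using \<open>autocontinuous E B \<nu>\<close> unfolding autocontinuous_def by blast
  have negligible_iff: "negligible_set E B \<nu> N \<longleftrightarrow> N = {}" for N
    using no_null sigma_maxitive_empty[OF \<open>sigma_maxitive B \<nu>\<close>]
    unfolding negligible_set_def by blast
  have "\<nu> A = (SUP x\<in>A. f x)" if "A \<in> B" for A
  proof -
    have "A \<inter> {x\<in>E. t < f x} = {} \<longleftrightarrow> (SUP x\<in>A. f x) \<le> t" for t
      using sets_into_space[OF that] by (auto simp: SUP_le_iff not_less)
    then show ?thesis
      using f[OF that] by (simp add: negligible_iff Inf_positive_upper_bounds_ennreal)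
  qed
  then show ?thesis
    unfolding has_cardinal_density_def by blast
qed

lemma cardinal_density_imp_completely_maxitive:
  assumes "has_cardinal_density E B \<nu>"
  shows "completely_maxitive B \<nu>"
  unfolding completely_maxitive_def
proof (intro allI impI)
  obtain c where c: "\<And>A. A \<in> B \<Longrightarrow> \<nu> A = (SUP x\<in>A. c x)"
    using assms unfolding has_cardinal_density_def by blast
  fix F assume "F \<subseteq> B" "\<Union>F \<in> B"
  then have "\<nu> (\<Union>F) = (SUP A\<in>F. SUP x\<in>A. c x)"
    using c SUP_UNION[of c "\<lambda>A. A" F] by simp
  also have "\<dots> = (SUP A\<in>F. \<nu> A)"
    using c \<open>F \<subseteq> B\<close> by (intro SUP_cong) auto
  finally show "\<nu> (\<Union>F) = (SUP A\<in>F. \<nu> A)" .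
qed

theorem corollary5p7:
  fixes E :: "'a set" and B :: "'a set set" and \<nu> :: "'a set \<Rightarrow> ennreal"
  assumes "E \<noteq> {}"
    and "sigma_algebra E B"
    and "sigma_maxitive B \<nu>"
    and "sigma_principal E B \<nu>"
  shows "autocontinuous E B \<nu> \<and>
         ((\<forall>N. negligible_set E B \<nu> N \<longrightarrow> N = {}) \<longrightarrow>
            completely_maxitive B \<nu> \<and> has_cardinal_density E B \<nu>)"
proof -
  obtain L where "sublevel_exhaustion E B \<nu> L"
    using sigma_principal_imp_sublevel_exhaustion assms(2-4) by blast
  then have "autocontinuous E B \<nu>"
    using sublevel_exhaustion_imp_autocontinuous assms(2,3) by blast
  moreover have "has_cardinal_density E B \<nu>"
    if "\<forall>N. negligible_set E B \<nu> N \<longrightarrow> N = {}"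
    using autocontinuous_imp_cardinal_density assms(2,3) \<open>autocontinuous E B \<nu>\<close> that by blast
  ultimately show ?thesis
    using cardinal_density_imp_completely_maxitive by blast
qed

end
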